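(* Let $k_1,k_2,k_3,a_2,a_5$ be real constants with $(a_2,a_5)\neq(0,0)$, let $r=\sqrt{x^2+y^2}$, and consider the Newtonian system $\ddot x=-\partial_x V_3$, $\ddot y=-\partial_y V_3$ on the region of the plane where $r\neq0$ and $a_2y-a_5x\neq 0$, with potential $$V_3=\frac{k_1}{(a_2y-a_5x)^2}+\frac{k_2}{r}+\frac{k_3(a_2x+a_5y)}{r(a_2y-a_5x)^2}.$$ Then \begin{align*} J_3=&(x\dot y-y\dot x)^2(a_2\dot x+a_5\dot y)+\frac{2k_1r^2}{(a_2y-a_5x)^2}(a_2\dot x+a_5\dot y)-\frac{k_2(a_2y-a_5x)}{r}(x\dot y-y\dot x)\\ &+\frac{k_3r}{a_2y-a_5x}(a_2\dot y-a_5\dot x)-\frac{k_3(a_2x+a_5y)}{r(a_2y-a_5x)}(x\dot y-y\dot x)+\frac{2k_3(a_2x+a_5y)r}{(a_2y-a_5x)^2}(a_2\dot x+a_5\dot y) \end{align*} is constant along every solution. *)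

theory Defs
  imports "HOL-Analysis.Analysis"
begin

definition V3 :: "real \<Rightarrow> real \<Rightarrow> real \<Rightarrow> real \<Rightarrow> real \<Rightarrow> real \<Rightarrow> real \<Rightarrow> real" where
  "V3 k1 k2 k3 a2 a5 x y =
     k1 / (a2*y - a5*x)^2 + k2 / sqrt (x^2 + y^2)
     + k3 * (a2*x + a5*y) / (sqrt (x^2 + y^2) * (a2*y - a5*x)^2)"

definition J3 :: "real \<Rightarrow> real \<Rightarrow> real \<Rightarrow> real \<Rightarrow> real \<Rightarrow> real \<Rightarrow> real \<Rightarrow> real \<Rightarrow> real \<Rightarrow> real" where
  "J3 k1 k2 k3 a2 a5 x y xd yd =
    (let r = sqrt (x^2 + y^2); L = x*yd - y*xd; P = a2*xd + a5*yd; D = a2*y - a5*x in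
       L^2 * P + 2*k1*r^2 / D^2 * P - k2*D / r * L
     + k3*r / D * (a2*yd - a5*xd) - k3*(a2*x + a5*y) / (r*D) * L
     + 2*k3*(a2*x + a5*y)*r / D^2 * P)"

end

(* Rotate the plane by (a2, a5): S = a2 x + a5 y and D = a2 y - a5 x are coordinates with
   S^2 + D^2 = n r^2, where n = a2^2 + a5^2, and P = a2 xd + a5 yd, Q = a2 yd - a5 xd are the
   matching velocity components; the angular momentum L = x yd - y xd satisfies n L = S Q - D P.
   Newton's equations express the derivatives of L, P and Q as rational functions of S, D and r,
   and J3 is a rational function of L, P, Q, S, D, r whose derivative along the flow vanishes
   modulo the two relations above. *)

theory Submission
  imports Defs
begin

definition V3_dx ::
    "real \<Rightarrow> real \<Rightarrow> real \<Rightarrow> real \<Rightarrow> real \<Rightarrow> real \<Rightarrow> real \<Rightarrow> real" where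
  "V3_dx k1 k2 k3 a2 a5 x y =
     (let r = sqrt (x^2 + y^2); D = a2*y - a5*x; S = a2*x + a5*y in
        2*k1*a5/D^3 - k2*x/r^3 + k3*(a2/(r*D^2) - S*x/(r^3*D^2) + 2*a5*S/(r*D^3)))"

definition V3_dy ::
    "real \<Rightarrow> real \<Rightarrow> real \<Rightarrow> real \<Rightarrow> real \<Rightarrow> real \<Rightarrow> real \<Rightarrow> real" where
  "V3_dy k1 k2 k3 a2 a5 x y =
     (let r = sqrt (x^2 + y^2); D = a2*y - a5*x; S = a2*x + a5*y in
        - 2*k1*a2/D^3 - k2*y/r^3 + k3*(a5/(r*D^2) - S*y/(r^3*D^2) - 2*a2*S/(r*D^3)))"

lemma V3_has_derivative_x:
  fixes x y :: real
  assumes r_pos: "x^2 + y^2 > 0" and D_nz: "a2*y - a5*x \<noteq> 0"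
  shows "((\<lambda>u. V3 k1 k2 k3 a2 a5 u y) has_real_derivative V3_dx k1 k2 k3 a2 a5 x y) (at x)"
proof -
  define r where "r = sqrt (x^2 + y^2)"
  have "r > 0" using r_pos by (simp add: r_def)
  show ?thesis
    unfolding V3_def V3_dx_def Let_def
    apply (rule derivative_eq_intros refl | use r_pos D_nz in force)+
    using \<open>r > 0\<close> D_nz by (simp add: r_def[symmetric] field_simps) algebra
qed

lemma V3_has_derivative_y:
  fixes x y :: real
  assumes r_pos: "x^2 + y^2 > 0" and D_nz: "a2*y - a5*x \<noteq> 0"
  shows "((\<lambda>v. V3 k1 k2 k3 a2 a5 x v) has_real_derivative V3_dy k1 k2 k3 a2 a5 x y) (at y)"
proof -
  define r where "r = sqrt (x^2 + y^2)"
  have "r > 0" using r_pos by (simp add: r_def)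
  show ?thesis
    unfolding V3_def V3_dy_def Let_def
    apply (rule derivative_eq_intros refl | use r_pos D_nz in force)+
    using \<open>r > 0\<close> D_nz by (simp add: r_def[symmetric] field_simps) algebra
qed

lemma V3_gradient_rotated:
  fixes k1 k2 k3 a2 a5 x y :: real
  assumes r_pos: "x^2 + y^2 > 0" and D_nz: "a2*y - a5*x \<noteq> 0"
  defines "r \<equiv> sqrt (x^2 + y^2)" and "D \<equiv> a2*y - a5*x" and "S \<equiv> a2*x + a5*y"
    and "n \<equiv> a2^2 + a5^2"
    and "Vx \<equiv> V3_dx k1 k2 k3 a2 a5 x y" and "Vy \<equiv> V3_dy k1 k2 k3 a2 a5 x y"
  shows "y*Vx - x*Vy = 2*k1*S/D^3 + k3*(D^2 + 2*S^2)/(r*D^3)"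
    and "- (a2*Vx + a5*Vy) = k2*S/r^3 - k3*(n/(r*D^2) - S^2/(r^3*D^2))"
    and "a5*Vx - a2*Vy = 2*k1*n/D^3 + k2*D/r^3 + k3*(S/(r^3*D) + 2*n*S/(r*D^3))"
proof -
  have "r > 0" using r_pos by (simp add: r_def)
  then show "y*Vx - x*Vy = 2*k1*S/D^3 + k3*(D^2 + 2*S^2)/(r*D^3)"
    and "- (a2*Vx + a5*Vy) = k2*S/r^3 - k3*(n/(r*D^2) - S^2/(r^3*D^2))"
    and "a5*Vx - a2*Vy = 2*k1*n/D^3 + k2*D/r^3 + k3*(S/(r^3*D) + 2*n*S/(r*D^3))"
    using D_nz[folded D_def]
    unfolding Vx_def Vy_def V3_dx_def V3_dy_def Let_def r_def[symmetric] D_def[symmetric]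
      S_def[symmetric]
    by (simp_all add: field_simps) (unfold S_def D_def n_def, algebra+)
qed

lemma radius_has_real_derivative:
  fixes x y :: "real \<Rightarrow> real"
  assumes r_pos: "x t^2 + y t^2 > 0"
    and dx: "(x has_real_derivative x') (at t)" and dy: "(y has_real_derivative y') (at t)"
  shows "((\<lambda>t. sqrt (x t^2 + y t^2)) has_real_derivative
           (x t * x' + y t * y') / sqrt (x t^2 + y t^2)) (at t)"
proof -
  have "((\<lambda>t. x t^2 + y t^2) has_real_derivative 2 * (x t * x' + y t * y')) (at t)"
    by (rule DERIV_cong, (rule derivative_eq_intros refl dx dy)+) simp
  from DERIV_chain2[OF DERIV_real_sqrt[OF r_pos] this] show ?thesis
    by (rule DERIV_cong) (simp add: field_split_simps)
qed

lemma rotated_invariant_has_derivative_zero: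
  fixes L P Q S D R :: "real \<Rightarrow> real" and n k1 k2 k3 :: real
  assumes R: "R t > 0" and D: "D t \<noteq> 0" and n: "n > 0"
    and norm: "S t^2 + D t^2 = n * R t^2" and ang: "S t * Q t - D t * P t = n * L t"
    and dS: "(S has_real_derivative P t) (at t)" and dD: "(D has_real_derivative Q t) (at t)"
    and dR: "(R has_real_derivative (S t * P t + D t * Q t) / (n * R t)) (at t)"
    and dL: "(L has_real_derivative 2*k1*S t/D t^3 + k3*(D t^2 + 2*S t^2)/(R t*D t^3)) (at t)"
    and dP: "(P has_real_derivative k2*S t/R t^3 - k3*(n/(R t*D t^2) - S t^2/(R t^3*D t^2))) (at t)"
    and dQ: "(Q has_real_derivative
      2*k1*n/D t^3 + k2*D t/R t^3 + k3*(S t/(R t^3*D t) + 2*n*S t/(R t*D t^3))) (at t)"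
  shows "((\<lambda>t. L t^2 * P t + 2*k1*R t^2/D t^2 * P t - k2*D t/R t * L t + k3*R t/D t * Q t
      - k3*S t/(R t*D t) * L t + 2*k3*S t*R t/D t^2 * P t) has_real_derivative 0) (at t)"
proof -
  have L: "L t = (S t * Q t - D t * P t) / n" using ang n by (simp add: field_simps)
  have R2: "R t^2 = (S t^2 + D t^2) / n" using norm n by (simp add: field_simps)
  show ?thesis
    apply (rule derivative_eq_intros refl dS dD dR dL dP dQ | use R D in force)+
    unfolding L using R D n R2 by (simp add: field_simps) algebra
qed

lemma J3_has_derivative_zero_along_solution:
  fixes k1 k2 k3 a2 a5 :: real and x y xd yd :: "real \<Rightarrow> real"
  assumes a_nz: "(a2, a5) \<noteq> (0, 0)"
    and r_pos: "x t^2 + y t^2 > 0" and D_nz: "a2 * y t - a5 * x t \<noteq> 0"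
    and dx: "(x has_real_derivative xd t) (at t)" and dy: "(y has_real_derivative yd t) (at t)"
    and dxd: "(xd has_real_derivative - V3_dx k1 k2 k3 a2 a5 (x t) (y t)) (at t)"
    and dyd: "(yd has_real_derivative - V3_dy k1 k2 k3 a2 a5 (x t) (y t)) (at t)"
  shows "((\<lambda>t. J3 k1 k2 k3 a2 a5 (x t) (y t) (xd t) (yd t)) has_real_derivative 0) (at t)"
proof -
  define n where "n = a2^2 + a5^2"
  define R where "R = (\<lambda>t. sqrt (x t^2 + y t^2))"
  define D where "D = (\<lambda>t. a2 * y t - a5 * x t)"
  define S where "S = (\<lambda>t. a2 * x t + a5 * y t)"
  define L where "L = (\<lambda>t. x t * yd t - y t * xd t)"
  define P where "P = (\<lambda>t. a2 * xd t + a5 * yd t)"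
  define Q where "Q = (\<lambda>t. a2 * yd t - a5 * xd t)"
  have n: "n > 0" using a_nz by (auto simp: n_def sum_power2_gt_zero_iff)
  have R: "R t > 0" using r_pos by (simp add: R_def)
  have D: "D t \<noteq> 0" using D_nz by (simp add: D_def)
  have Rt: "sqrt (x t^2 + y t^2) = R t" and Dt: "a2 * y t - a5 * x t = D t"
    and St: "a2 * x t + a5 * y t = S t" by (simp_all add: R_def D_def S_def)
  note grad = V3_gradient_rotated[OF r_pos D_nz, of k1 k2 k3, folded n_def, unfolded Rt Dt St]
  have norm: "S t^2 + D t^2 = n * R t^2"
    using r_pos by (simp add: S_def D_def R_def n_def) algebra
  have ang: "S t * Q t - D t * P t = n * L t"
    by (simp add: S_def D_def P_def Q_def L_def n_def) algebra
  have dS: "(S has_real_derivative P t) (at t)"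
    unfolding S_def P_def by (rule derivative_eq_intros refl dx dy)+ simp
  have dD: "(D has_real_derivative Q t) (at t)"
    unfolding D_def Q_def by (rule derivative_eq_intros refl dx dy)+ simp
  have "(R has_real_derivative (x t * xd t + y t * yd t) / R t) (at t)"
    using radius_has_real_derivative[where x = x and y = y, OF r_pos dx dy] unfolding R_def .
  moreover have "S t * P t + D t * Q t = n * (x t * xd t + y t * yd t)"
    by (simp add: S_def D_def P_def Q_def n_def) algebra
  ultimately have dR: "(R has_real_derivative (S t * P t + D t * Q t) / (n * R t)) (at t)"
    using n by simp
  have dL: "(L has_real_derivative 2*k1*S t/D t^3 + k3*(D t^2 + 2*S t^2)/(R t*D t^3)) (at t)"
    unfolding L_def grad(1)[symmetric]
    by (rule derivative_eq_intros refl dx dy dxd dyd)+ (simp add: algebra_simps)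
  have dP: "(P has_real_derivative k2*S t/R t^3 - k3*(n/(R t*D t^2) - S t^2/(R t^3*D t^2))) (at t)"
    unfolding P_def grad(2)[symmetric]
    by (rule derivative_eq_intros refl dxd dyd)+ (simp add: algebra_simps)
  have dQ: "(Q has_real_derivative
      2*k1*n/D t^3 + k2*D t/R t^3 + k3*(S t/(R t^3*D t) + 2*n*S t/(R t*D t^3))) (at t)"
    unfolding Q_def grad(3)[symmetric]
    by (rule derivative_eq_intros refl dxd dyd)+ (simp add: algebra_simps)
  show ?thesis
    using rotated_invariant_has_derivative_zero[OF R D n norm ang dS dD dR dL dP dQ]
    unfolding J3_def Let_def R_def D_def S_def L_def P_def Q_def .
qed

theorem mainTheorem6:
  fixes k1 k2 k3 a2 a5 :: real
    and x y xd yd :: "real \<Rightarrow> real" and I :: "real set"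
  assumes "(a2, a5) \<noteq> (0, 0)"
    and "open I" and "is_interval I"
    and "\<And>t. t \<in> I \<Longrightarrow> sqrt ((x t)^2 + (y t)^2) \<noteq> 0"
    and "\<And>t. t \<in> I \<Longrightarrow> a2 * y t - a5 * x t \<noteq> 0"
    and "\<And>t. t \<in> I \<Longrightarrow> (x has_real_derivative xd t) (at t)"
    and "\<And>t. t \<in> I \<Longrightarrow> (y has_real_derivative yd t) (at t)"
    and "\<And>t. t \<in> I \<Longrightarrow>
           (xd has_real_derivative - deriv (\<lambda>u. V3 k1 k2 k3 a2 a5 u (y t)) (x t)) (at t)"
    and "\<And>t. t \<in> I \<Longrightarrow>
           (yd has_real_derivative - deriv (\<lambda>v. V3 k1 k2 k3 a2 a5 (x t) v) (y t)) (at t)"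
    and "s \<in> I" and "t \<in> I"
  shows "J3 k1 k2 k3 a2 a5 (x s) (y s) (xd s) (yd s) = J3 k1 k2 k3 a2 a5 (x t) (y t) (xd t) (yd t)"
proof -
  have J3_deriv:
    "((\<lambda>t. J3 k1 k2 k3 a2 a5 (x t) (y t) (xd t) (yd t)) has_real_derivative 0) (at t)"
    if "t \<in> I" for t
  proof -
    have r_pos: "x t^2 + y t^2 > 0"
      using assms(4)[OF that] by (simp add: sum_power2_gt_zero_iff)
    note D_nz = assms(5)[OF that]
    have dxd: "(xd has_real_derivative - V3_dx k1 k2 k3 a2 a5 (x t) (y t)) (at t)"
      using assms(8)[OF that] unfolding DERIV_imp_deriv[OF V3_has_derivative_x[OF r_pos D_nz]] .
    have dyd: "(yd has_real_derivative - V3_dy k1 k2 k3 a2 a5 (x t) (y t)) (at t)"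
      using assms(9)[OF that] unfolding DERIV_imp_deriv[OF V3_has_derivative_y[OF r_pos D_nz]] .
    show ?thesis
      by (rule J3_has_derivative_zero_along_solution
          [OF assms(1) r_pos D_nz assms(6,7)[OF that] dxd dyd])
  qed
  have "\<exists>c. \<forall>u\<in>I. J3 k1 k2 k3 a2 a5 (x u) (y u) (xd u) (yd u) = c"
    by (rule has_field_derivative_zero_constant[OF is_interval_convex[OF assms(3)]])
      (rule has_field_derivative_at_within[OF J3_deriv])
  then obtain c where "\<forall>u\<in>I. J3 k1 k2 k3 a2 a5 (x u) (y u) (xd u) (yd u) = c" ..
  then show ?thesis using assms(10,11) by simp
qed

end
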